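(* Let $P$ be a poset with an $\mathbb{R}$-action $\Lambda$. Let $I,J$ be intervals of $P$ and $\epsilon\ge0$ with $I\subseteq\mathrm{Ex}^\Lambda_\epsilon(J)$ and $J\subseteq\mathrm{Ex}^\Lambda_\epsilon(I)$. Then the interval modules $k_I$ and $k_J$ are $\Lambda_\epsilon$-interleaved.
   Context: Let $k$ be a field. A $P$-persistence module $V$ is a functor from the poset $P$ (as a category) to $k$-vector spaces, with spaces $V_p$ and maps $V(p,q)$ for $p\le q$; morphisms are natural transformations. An interval of $P$ is a nonempty convex and connected subset (convex: $p,q\in I$, $p\le r\le q$ imply $r\in I$; connected: any two elements are joined by a finite sequence in $I$ with consecutive ones comparable). The interval module $k_I$ is $k$ on $I$ and $0$ elsewhere, with identity maps within $I$ and zero maps otherwise. For $A\subseteq P$ nonempty, $A^\uparrow=\{p:\exists a\in A,\ a\le p\}$ and $A^\downarrow=\{p:\exists a\in A,\ p\le a\}$; $\emptyset^\uparrow=\emptyset^\downarrow=P$. An $\mathbb{R}$-action on $P$ is a family $\{\Lambda_\epsilon\}_{\epsilon\ge0}$ of poset automorphisms with $p\le\Lambda_\epsilon(p)$, $\Lambda_0=\mathrm{id}$ and $\Lambda_\epsilon\Lambda_\zeta=\Lambda_{\epsilon+\zeta}$. $\mathrm{Ex}^\Lambda_\epsilon(A)=\Lambda_\epsilon^{-1}(A)^\uparrow\cap\Lambda_\epsilon(A)^\downarrow$, with $\Lambda_\epsilon^{-1}(A)$ the preimage. Shifts and interleavings: - $V(\epsilon)_p=V_{\Lambda_\epsilon(p)}$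 and $V(\epsilon)(p,q)=V(\Lambda_\epsilon p,\Lambda_\epsilon q)$; - for a morphism $\phi$, $\phi(\epsilon)$ has components $\phi_{\Lambda_\epsilon(p)}$; - $V_{0\to\epsilon}\colon V\to V(\epsilon)$ has components $V(p,\Lambda_\epsilon p)$; - $V$ and $W$ are $\Lambda_\epsilon$-interleaved if there exist $\alpha\colon V\to W(\epsilon)$ and $\beta\colon W\to V(\epsilon)$ with $\beta(\epsilon)\alpha=V_{0\to2\epsilon}$ and $\alpha(\epsilon)\beta=W_{0\to2\epsilon}$. *)

theory Defs
  imports Complex_Main
begin

definition convex_set :: "'p::order set \<Rightarrow> bool" where
  "convex_set I \<longleftrightarrow> (\<forall>p\<in>I. \<forall>q\<in>I. \<forall>r. p \<le> r \<and> r \<le> q \<longrightarrow> r \<in> I)"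

definition connected_set :: "'p::order set \<Rightarrow> bool" where
  "connected_set I \<longleftrightarrow> (\<forall>p\<in>I. \<forall>q\<in>I. \<exists>xs. xs \<noteq> [] \<and> hd xs = p \<and> last xs = q \<and> set xs \<subseteq> I \<and>
      (\<forall>i. Suc i < length xs \<longrightarrow> xs ! i \<le> xs ! Suc i \<or> xs ! Suc i \<le> xs ! i))"

definition is_interval :: "'p::order set \<Rightarrow> bool" where
  "is_interval I \<longleftrightarrow> I \<noteq> {} \<and> convex_set I \<and> connected_set I"

definition upset :: "'p::order set \<Rightarrow> 'p set" where
  "upset A = (if A = {} then UNIV else {p. \<exists>a\<in>A. a \<le> p})"

definition downset :: "'p::order set \<Rightarrow> 'p set" where
  "downset A = (if A = {} then UNIV else {p. \<exists>a\<in>A. p \<le> a})"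

definition poset_automorphism :: "('p::order \<Rightarrow> 'p) \<Rightarrow> bool" where
  "poset_automorphism f \<longleftrightarrow> bij f \<and> (\<forall>p q. p \<le> q \<longleftrightarrow> f p \<le> f q)"

text \<open>An R-action: the family is indexed by nonnegative reals; values at negative reals are irrelevant.\<close>
definition R_action :: "(real \<Rightarrow> 'p::order \<Rightarrow> 'p) \<Rightarrow> bool" where
  "R_action \<Lambda> \<longleftrightarrow>
     (\<forall>e\<ge>0. poset_automorphism (\<Lambda> e)) \<and>
     (\<forall>e\<ge>0. \<forall>p. p \<le> \<Lambda> e p) \<and>
     \<Lambda> 0 = id \<and>
     (\<forall>e\<ge>0. \<forall>z\<ge>0. \<Lambda> e \<circ> \<Lambda> z = \<Lambda> (e + z))"

definition Ex_set :: "(real \<Rightarrow> 'p::order \<Rightarrow> 'p) \<Rightarrow> real \<Rightarrow> 'p set \<Rightarrow> 'p set" where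
  "Ex_set \<Lambda> e A = upset (\<Lambda> e -` A) \<inter> downset (\<Lambda> e ` A)"

text \<open>A persistence module is given by a family of subspaces V p of an ambient
  k-vector space (with scalar multiplication scale) and structure maps F p q.\<close>

definition lin_on :: "('k::field \<Rightarrow> 'v::ab_group_add \<Rightarrow> 'v) \<Rightarrow> ('k \<Rightarrow> 'w::ab_group_add \<Rightarrow> 'w)
     \<Rightarrow> 'v set \<Rightarrow> 'w set \<Rightarrow> ('v \<Rightarrow> 'w) \<Rightarrow> bool" where
  "lin_on sv sw A B f \<longleftrightarrow> (\<forall>x\<in>A. f x \<in> B) \<and>
     (\<forall>x\<in>A. \<forall>y\<in>A. f (x + y) = f x + f y) \<and> (\<forall>c. \<forall>x\<in>A. f (sv c x) = sw c (f x))"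

definition is_subspace :: "('k::field \<Rightarrow> 'v::ab_group_add \<Rightarrow> 'v) \<Rightarrow> 'v set \<Rightarrow> bool" where
  "is_subspace s A \<longleftrightarrow> 0 \<in> A \<and> (\<forall>x\<in>A. \<forall>y\<in>A. x + y \<in> A) \<and> (\<forall>c. \<forall>x\<in>A. s c x \<in> A)"

definition is_pmod :: "('k::field \<Rightarrow> 'v::ab_group_add \<Rightarrow> 'v) \<Rightarrow> ('p::order \<Rightarrow> 'v set)
     \<Rightarrow> ('p \<Rightarrow> 'p \<Rightarrow> 'v \<Rightarrow> 'v) \<Rightarrow> bool" where
  "is_pmod s V F \<longleftrightarrow> vector_space s \<and> (\<forall>p. is_subspace s (V p)) \<and>
     (\<forall>p q. p \<le> q \<longrightarrow> lin_on s s (V p) (V q) (F p q)) \<and>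
     (\<forall>p. \<forall>x\<in>V p. F p p x = x) \<and>
     (\<forall>p q r. p \<le> q \<and> q \<le> r \<longrightarrow> (\<forall>x\<in>V p. F q r (F p q x) = F p r x))"

definition is_pmor :: "('k::field \<Rightarrow> 'v::ab_group_add \<Rightarrow> 'v) \<Rightarrow> ('k \<Rightarrow> 'w::ab_group_add \<Rightarrow> 'w)
     \<Rightarrow> ('p::order \<Rightarrow> 'v set) \<Rightarrow> ('p \<Rightarrow> 'p \<Rightarrow> 'v \<Rightarrow> 'v)
     \<Rightarrow> ('p \<Rightarrow> 'w set) \<Rightarrow> ('p \<Rightarrow> 'p \<Rightarrow> 'w \<Rightarrow> 'w) \<Rightarrow> ('p \<Rightarrow> 'v \<Rightarrow> 'w) \<Rightarrow> bool" where
  "is_pmor sv sw V F W G \<phi> \<longleftrightarrow> (\<forall>p. lin_on sv sw (V p) (W p) (\<phi> p)) \<and>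
     (\<forall>p q. p \<le> q \<longrightarrow> (\<forall>x\<in>V p. \<phi> q (F p q x) = G p q (\<phi> p x)))"

text \<open>Shifts: V(e)_p = V_{Lambda_e p}, V(e)(p,q) = V(Lambda_e p, Lambda_e q); phi(e)_p = phi_{Lambda_e p};
  V_{0->e}_p = V(p, Lambda_e p).\<close>
definition shift_sp :: "(real \<Rightarrow> 'p \<Rightarrow> 'p) \<Rightarrow> real \<Rightarrow> ('p \<Rightarrow> 'v set) \<Rightarrow> 'p \<Rightarrow> 'v set" where
  "shift_sp \<Lambda> e V = (\<lambda>p. V (\<Lambda> e p))"

definition shift_map :: "(real \<Rightarrow> 'p \<Rightarrow> 'p) \<Rightarrow> real \<Rightarrow> ('p \<Rightarrow> 'p \<Rightarrow> 'v \<Rightarrow> 'v) \<Rightarrow> 'p \<Rightarrow> 'p \<Rightarrow> 'v \<Rightarrow> 'v" where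
  "shift_map \<Lambda> e F = (\<lambda>p q. F (\<Lambda> e p) (\<Lambda> e q))"

definition shift_mor :: "(real \<Rightarrow> 'p \<Rightarrow> 'p) \<Rightarrow> real \<Rightarrow> ('p \<Rightarrow> 'v \<Rightarrow> 'w) \<Rightarrow> 'p \<Rightarrow> 'v \<Rightarrow> 'w" where
  "shift_mor \<Lambda> e \<phi> = (\<lambda>p. \<phi> (\<Lambda> e p))"

definition shift_unit :: "(real \<Rightarrow> 'p \<Rightarrow> 'p) \<Rightarrow> real \<Rightarrow> ('p \<Rightarrow> 'p \<Rightarrow> 'v \<Rightarrow> 'v) \<Rightarrow> 'p \<Rightarrow> 'v \<Rightarrow> 'v" where
  "shift_unit \<Lambda> e F = (\<lambda>p. F p (\<Lambda> e p))"

text \<open>Lambda_e-interleaving. Equality of morphisms means equality of components on each V p.\<close>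
definition interleaved :: "('k::field \<Rightarrow> 'v::ab_group_add \<Rightarrow> 'v) \<Rightarrow> ('k \<Rightarrow> 'w::ab_group_add \<Rightarrow> 'w)
     \<Rightarrow> (real \<Rightarrow> 'p::order \<Rightarrow> 'p) \<Rightarrow> real
     \<Rightarrow> ('p \<Rightarrow> 'v set) \<Rightarrow> ('p \<Rightarrow> 'p \<Rightarrow> 'v \<Rightarrow> 'v)
     \<Rightarrow> ('p \<Rightarrow> 'w set) \<Rightarrow> ('p \<Rightarrow> 'p \<Rightarrow> 'w \<Rightarrow> 'w) \<Rightarrow> bool" where
  "interleaved sv sw \<Lambda> e V F W G \<longleftrightarrow>
     (\<exists>\<alpha> \<beta>. is_pmor sv sw V F (shift_sp \<Lambda> e W) (shift_map \<Lambda> e G) \<alpha> \<and>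
            is_pmor sw sv W G (shift_sp \<Lambda> e V) (shift_map \<Lambda> e F) \<beta> \<and>
            (\<forall>p. \<forall>x\<in>V p. shift_mor \<Lambda> e \<beta> p (\<alpha> p x) = shift_unit \<Lambda> (2 * e) F p x) \<and>
            (\<forall>p. \<forall>x\<in>W p. shift_mor \<Lambda> e \<alpha> p (\<beta> p x) = shift_unit \<Lambda> (2 * e) G p x))"

definition imod_sp :: "'p set \<Rightarrow> 'p \<Rightarrow> 'k::field set" where
  "imod_sp I p = (if p \<in> I then UNIV else {0})"

definition imod_map :: "'p set \<Rightarrow> 'p \<Rightarrow> 'p \<Rightarrow> 'k::field \<Rightarrow> 'k" where
  "imod_map I p q = (if p \<in> I \<and> q \<in> I then id else (\<lambda>_. 0))"

end

theory Submission
  imports Defs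
begin

text \<open>Both interleaving morphisms are the identity wherever source and target are k and zero
  elsewhere. Naturality and the interleaving equations then reduce to membership statements, each
  obtained from convexity of one interval squeezed between two shifted points that
  Ex_set provides for the other.\<close>

lemma poset_automorphism_le_iff:
  "poset_automorphism f \<Longrightarrow> f p \<le> f q \<longleftrightarrow> p \<le> q"
  unfolding poset_automorphism_def by blast

lemma poset_automorphism_surj: "poset_automorphism f \<Longrightarrow> surj f"
  unfolding poset_automorphism_def by (simp add: bij_is_surj)

lemma R_action_automorphism:
  "R_action \<Lambda> \<Longrightarrow> e \<ge> 0 \<Longrightarrow> poset_automorphism (\<Lambda> e)"
  unfolding R_action_def by blast

lemma R_action_double:
  assumes "R_action \<Lambda>" and "e \<ge> 0"
  shows "\<Lambda> (2 * e) = \<Lambda> e \<circ> \<Lambda> e"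
  using assms unfolding R_action_def mult_2 by metis

lemma convex_setD: "convex_set A \<Longrightarrow> x \<in> A \<Longrightarrow> y \<in> A \<Longrightarrow> x \<le> r \<Longrightarrow> r \<le> y \<Longrightarrow> r \<in> A"
  unfolding convex_set_def by blast

lemma mem_Ex_setE:
  assumes "surj (\<Lambda> e)" and "A \<noteq> {}" and "p \<in> Ex_set \<Lambda> e A"
  obtains a c where "\<Lambda> e a \<in> A" "a \<le> p" "c \<in> A" "p \<le> \<Lambda> e c"
proof -
  have "\<Lambda> e -` A \<noteq> {}"
    using assms(1,2) by (metis surj_def ex_in_conv vimageI2)
  then show thesis
    using assms(2,3) that unfolding Ex_set_def upset_def downset_def by auto
qed

lemma shift_mem_if_above_shift_mem:
  assumes aut: "poset_automorphism (\<Lambda> e)" and "convex_set A" and "A \<noteq> {}"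
    and "B \<subseteq> Ex_set \<Lambda> e A" and "p \<in> B" and "p \<le> q" and "\<Lambda> e q \<in> A"
  shows "\<Lambda> e p \<in> A"
proof -
  obtain a where "\<Lambda> e a \<in> A" "a \<le> p"
    using mem_Ex_setE[of \<Lambda> e, OF poset_automorphism_surj[OF aut]] assms(3-5) by blast
  then show ?thesis
    using assms(2,6,7) convex_setD poset_automorphism_le_iff[OF aut] by metis
qed

lemma mem_if_above_and_shift_mem:
  assumes aut: "poset_automorphism (\<Lambda> e)" and "convex_set B" and "B \<noteq> {}"
    and "A \<subseteq> Ex_set \<Lambda> e B" and "p \<in> B" and "p \<le> q" and "\<Lambda> e q \<in> A"
  shows "q \<in> B"
proof -
  obtain b where "b \<in> B" "\<Lambda> e q \<le> \<Lambda> e b"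
    using mem_Ex_setE[of \<Lambda> e, OF poset_automorphism_surj[OF aut]] assms(3,4,7) by blast
  then show ?thesis
    using assms(2,5,6) convex_setD poset_automorphism_le_iff[OF aut] by metis
qed

lemma shift_mem_if_double_shift_mem:
  assumes aut: "poset_automorphism (\<Lambda> e)" and "convex_set A" and "A \<noteq> {}"
    and "B \<subseteq> Ex_set \<Lambda> e A" and "p \<in> B" and "\<Lambda> e (\<Lambda> e p) \<in> B"
  shows "\<Lambda> e p \<in> A"
proof -
  note Ex_setE = mem_Ex_setE[of \<Lambda> e, OF poset_automorphism_surj[OF aut] \<open>A \<noteq> {}\<close>]
  obtain a where "\<Lambda> e a \<in> A" "a \<le> p"
    using Ex_setE assms(4,5) by blast
  moreover obtain c where "c \<in> A" "\<Lambda> e (\<Lambda> e p) \<le> \<Lambda> e c"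
    using Ex_setE assms(4,6) by blast
  ultimately show ?thesis
    using assms(2) convex_setD poset_automorphism_le_iff[OF aut] by metis
qed

definition imod_mor :: "'p set \<Rightarrow> 'p set \<Rightarrow> ('p \<Rightarrow> 'p) \<Rightarrow> 'p \<Rightarrow> 'k::zero \<Rightarrow> 'k" where
  "imod_mor I J f p x = (if p \<in> I \<and> f p \<in> J then x else 0)"

lemma imod_sp_outside: "x \<in> imod_sp I p \<Longrightarrow> p \<notin> I \<Longrightarrow> x = 0"
  unfolding imod_sp_def by simp

lemma is_pmor_imod_mor:
  assumes aut: "poset_automorphism (\<Lambda> e)"
    and cI: "convex_set I" and cJ: "convex_set J" and "I \<noteq> {}" and "J \<noteq> {}"
    and IJ: "I \<subseteq> Ex_set \<Lambda> e J" and JI: "J \<subseteq> Ex_set \<Lambda> e I"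
  shows "is_pmor ((*) :: 'k::field \<Rightarrow> _) (*) (imod_sp I) (imod_map I)
           (shift_sp \<Lambda> e (imod_sp J)) (shift_map \<Lambda> e (imod_map J)) (imod_mor I J (\<Lambda> e))"
  unfolding is_pmor_def shift_sp_def shift_map_def
proof (intro conjI allI impI ballI)
  fix p
  show "lin_on ((*) :: 'k \<Rightarrow> _) (*) (imod_sp I p) (imod_sp J (\<Lambda> e p)) (imod_mor I J (\<Lambda> e) p)"
    unfolding lin_on_def imod_sp_def imod_mor_def by auto
next
  fix p q and x :: 'k
  assume pq: "p \<le> q" and x: "x \<in> imod_sp I p"
  show "imod_mor I J (\<Lambda> e) q (imod_map I p q x)
        = imod_map J (\<Lambda> e p) (\<Lambda> e q) (imod_mor I J (\<Lambda> e) p x)"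
  proof (cases "p \<in> I")
    case False
    then show ?thesis
      using imod_sp_outside[OF x] unfolding imod_map_def imod_mor_def by simp
  next
    case True
    have "\<Lambda> e q \<in> J \<Longrightarrow> \<Lambda> e p \<in> J"
      using shift_mem_if_above_shift_mem[OF aut cJ \<open>J \<noteq> {}\<close> IJ True pq] .
    moreover have "\<Lambda> e q \<in> J \<Longrightarrow> q \<in> I"
      using mem_if_above_and_shift_mem[OF aut cI \<open>I \<noteq> {}\<close> JI True pq] .
    ultimately show ?thesis
      using True unfolding imod_map_def imod_mor_def by auto
  qed
qed

lemma imod_mor_comp_eq_shift_unit:
  assumes "R_action \<Lambda>" and "e \<ge> 0"
    and "convex_set J" and "J \<noteq> {}" and "I \<subseteq> Ex_set \<Lambda> e J"
    and x: "x \<in> imod_sp I p"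
  shows "shift_mor \<Lambda> e (imod_mor J I (\<Lambda> e)) p (imod_mor I J (\<Lambda> e) p x)
         = shift_unit \<Lambda> (2 * e) (imod_map I) p (x :: 'k::field)"
proof (cases "p \<in> I")
  case False
  then show ?thesis
    using imod_sp_outside[OF x]
    unfolding shift_mor_def shift_unit_def imod_map_def imod_mor_def by simp
next
  case True
  have "\<Lambda> e (\<Lambda> e p) \<in> I \<Longrightarrow> \<Lambda> e p \<in> J"
    using shift_mem_if_double_shift_mem[OF R_action_automorphism[OF assms(1,2)] assms(3-5) True] .
  then show ?thesis
    using True R_action_double[OF assms(1,2)]
    unfolding shift_mor_def shift_unit_def imod_map_def imod_mor_def by auto
qed

theorem proposition2p17:
  fixes \<Lambda> :: "real \<Rightarrow> 'p::order \<Rightarrow> 'p" and I J :: "'p set" and e :: real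
  assumes "R_action \<Lambda>"
    and "is_interval I" and "is_interval J"
    and "e \<ge> 0"
    and "I \<subseteq> Ex_set \<Lambda> e J" and "J \<subseteq> Ex_set \<Lambda> e I"
  shows "interleaved ((*) :: 'k::field \<Rightarrow> 'k \<Rightarrow> 'k) ((*) :: 'k \<Rightarrow> 'k \<Rightarrow> 'k) \<Lambda> e
           (imod_sp I) (imod_map I) (imod_sp J) (imod_map J)"
proof -
  have aut: "poset_automorphism (\<Lambda> e)"
    using R_action_automorphism assms(1,4) .
  have I: "convex_set I" "I \<noteq> {}" and J: "convex_set J" "J \<noteq> {}"
    using assms(2,3) unfolding is_interval_def by auto
  show ?thesis
    unfolding interleaved_def
  proof (intro exI conjI allI ballI)
    show "is_pmor (*) (*) (imod_sp I) (imod_map I) (shift_sp \<Lambda> e (imod_sp J))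
            (shift_map \<Lambda> e (imod_map J)) (imod_mor I J (\<Lambda> e) :: _ \<Rightarrow> 'k \<Rightarrow> _)"
      using is_pmor_imod_mor[OF aut I(1) J(1) I(2) J(2) assms(5,6)] .
    show "is_pmor (*) (*) (imod_sp J) (imod_map J) (shift_sp \<Lambda> e (imod_sp I))
            (shift_map \<Lambda> e (imod_map I)) (imod_mor J I (\<Lambda> e) :: _ \<Rightarrow> 'k \<Rightarrow> _)"
      using is_pmor_imod_mor[OF aut J(1) I(1) J(2) I(2) assms(6,5)] .
  qed (use imod_mor_comp_eq_shift_unit assms(1,4-6) I J in blast)+
qed

end
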